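(* Let $n\ge2$, $1<p<\infty$, $R>0$, $\bar\beta>0$ a constant, and let $f$ be as in the context. Then there exists a positive constant $C=C(R)$ such that $f(r)\le C(R)\,r$ for all $0\le r\le R$.
   Context: $F:\mathbb R^n\to[0,\infty)$ is convex, even, positively 1-homogeneous, with $a|\xi|\le F(\xi)\le b|\xi|$ ($0<a\le b$), $F\in C^2(\mathbb R^n\setminus\{0\})$, Hessian of $F^p$ positive definite off the origin; $F^o(v)=\sup_{\xi\ne0}\langle\xi,v\rangle/F(\xi)$ and $\mathcal W_R=\{x:F^o(x)<R\}$. $\ell_1(\bar\beta,\mathcal W_R)=\inf_{v\in W^{1,p}(\mathcal W_R),v\not\equiv0}\frac{\int_{\mathcal W_R}F^p(\nabla v)dx+\bar\beta\int_{\partial\mathcal W_R}|v|^pF(\nu)d\mathcal H^{n-1}}{\int_{\mathcal W_R}|v|^pdx}$ ($\nu$ the Euclidean outer normal). It is known that the positive first eigenfunction on $\mathcal W_R$ has the form $v(x)=\rho(F^o(x))$, where $\rho\in C^\infty(]0,R[)\cap C^1([0,R])$ is positive, decreasing, and solves $-(p-1)(-\rho'(r))^{p-2}\rho''(r)+\frac{n-1}{r}(-\rho'(r))^{p-1}=\ell_1(\bar\beta,\mathcal W_R)\rho(r)^{p-1}$ for $r\in]0,R[$, $\rho'(0)=0$, $-(-\rho'(R))^{p-1}+\bar\beta\rho(R)^{p-1}=0$. Define $f(r)=\dfrac{(-\rho'(r))^{p-1}}{\rho(r)^{p-1}}$ for $r\in[0,R]$. *)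

theory Defs
  imports "HOL-Analysis.Analysis"
begin

definition smooth_on :: "(real \<Rightarrow> real) \<Rightarrow> real set \<Rightarrow> bool" where
  "smooth_on g S \<longleftrightarrow>
     (\<exists>D :: nat \<Rightarrow> real \<Rightarrow> real. D 0 = g \<and>
        (\<forall>k. \<forall>x\<in>S. (D k has_real_derivative D (Suc k) x) (at x)))"

end

theory Submission
  imports Defs
begin

text \<open>Write g = (-\<rho>')^(p-1). The equation says exactly that (r^(n-1) g)' = \<lambda> r^(n-1) \<rho>^(p-1),
  and the right-hand side is at most M r^(n-1) with M = max \<lambda> 0 * \<rho>(0)^(p-1) since \<rho> decreases.
  Integrating from 0 (where g vanishes) gives g(r) \<le> M r / n, and dividing by
  \<rho>(r)^(p-1) \<ge> \<rho>(R)^(p-1) > 0 yields the linear bound. The derivative of g exists only where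
  g > 0, so the integration is replaced by a comparison argument that only differentiates there.\<close>

lemma has_real_derivative_nonpos_if_antimono_on:
  fixes f :: "real \<Rightarrow> real"
  assumes anti: "antimono_on {a..b} f" and der: "(f has_real_derivative d) (at x)"
    and "a \<le> x" "x < b"
  shows "d \<le> 0"
proof (rule ccontr)
  assume "\<not> d \<le> 0"
  then obtain e where "e > 0" and inc: "\<And>h. 0 < h \<Longrightarrow> h < e \<Longrightarrow> f x < f (x + h)"
    using DERIV_pos_inc_right[OF der] by auto
  define h where "h = min (e / 2) (b - x)"
  have "0 < h" "h < e" "x + h \<le> b"
    using \<open>e > 0\<close> \<open>x < b\<close> by (auto simp: h_def)
  then have "f (x + h) \<le> f x"
    using \<open>a \<le> x\<close> by (intro monotone_onD[OF anti]) auto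
  with inc[OF \<open>0 < h\<close> \<open>h < e\<close>] show False
    by linarith
qed

lemma derivative_nonpos_if_antimono_on:
  fixes f f' :: "real \<Rightarrow> real"
  assumes "a < b" and anti: "antimono_on {a..b} f"
    and der: "\<forall>x\<in>{a..b}. (f has_real_derivative f' x) (at x within {a..b})"
    and cont: "continuous_on {a..b} f'" and x: "x \<in> {a..b}"
  shows "f' x \<le> 0"
proof -
  have "f' y \<le> 0" if y: "y \<in> {a<..<b}" for y
  proof (rule has_real_derivative_nonpos_if_antimono_on[OF anti])
    show "(f has_real_derivative f' y) (at y)"
      using bspec[OF der, of y] y by (auto simp: at_within_Icc_at)
  qed (use y in auto)
  moreover have "closure {a<..<b} = {a..b}"
    using \<open>a < b\<close> by simp
  ultimately show ?thesis
    using continuous_le_on_closure[of "{a<..<b}" f' x 0] cont x by auto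
qed

lemma smooth_on_derivative_has_derivative:
  fixes f f' :: "real \<Rightarrow> real"
  assumes "smooth_on f S" "open S" "x \<in> S"
    and der: "\<And>y. y \<in> S \<Longrightarrow> (f has_real_derivative f' y) (at y)"
  shows "(f' has_real_derivative deriv f' x) (at x)"
proof -
  obtain D :: "nat \<Rightarrow> real \<Rightarrow> real" where "D 0 = f"
    and D: "\<And>k y. y \<in> S \<Longrightarrow> (D k has_real_derivative D (Suc k) y) (at y)"
    using \<open>smooth_on f S\<close> unfolding smooth_on_def by blast
  have D1: "D 1 y = f' y" if "y \<in> S" for y
  proof -
    have "(f has_real_derivative D 1 y) (at y)"
      using D[OF that, of 0] \<open>D 0 = f\<close> by simp
    from DERIV_unique[OF der[OF that] this] show ?thesis
      by simp
  qed
  have "(D 1 has_real_derivative D 2 x) (at x)"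
    using D[OF \<open>x \<in> S\<close>, of 1] by (simp add: numeral_2_eq_2)
  then have "(f' has_real_derivative D 2 x) (at x)"
    using \<open>open S\<close> \<open>x \<in> S\<close> D1 by (rule has_field_derivative_transform_within_open)
  then show ?thesis
    using DERIV_imp_deriv by metis
qed

lemma has_real_derivative_neg_powr:
  fixes u :: "real \<Rightarrow> real"
  assumes "(u has_real_derivative u') (at t)" "u t < 0"
  shows "((\<lambda>r. (- u r) powr q) has_real_derivative - q * (- u t) powr (q - 1) * u') (at t)"
  using DERIV_fun_powr[OF DERIV_minus[OF assms(1)], of q] assms(2) by simp

lemma nonpos_if_deriv_nonpos_where_pos:
  fixes h :: "real \<Rightarrow> real"
  assumes "a \<le> b" and cont: "continuous_on {a..b} h" and "h a \<le> 0"
    and deriv: "\<And>x. x \<in> {a<..<b} \<Longrightarrow> h x > 0 \<Longrightarrow> \<exists>y. (h has_real_derivative y) (at x) \<and> y \<le> 0"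
  shows "h b \<le> 0"
proof (rule ccontr)
  assume hb: "\<not> h b \<le> 0"
  define S where "S = {x \<in> {a..b}. h x \<le> 0}"
  have "closed S"
    unfolding S_def by (rule continuous_on_closed_Collect_le[OF cont]) auto
  moreover have "a \<in> S" "bdd_above S"
    using assms by (auto simp: S_def intro: bdd_aboveI[of _ b])
  ultimately have "Sup S \<in> S"
    using closed_contains_Sup by blast
  define s where "s = Sup S"
  have s: "a \<le> s" "s < b" "h s \<le> 0"
    using \<open>Sup S \<in> S\<close> hb unfolding s_def S_def by (auto simp: order.order_iff_strict)
  \<comment> \<open>beyond the last zero of h before b, h stays positive, so it cannot increase\<close>
  have pos_after: "h x > 0" if "s < x" "x \<le> b" for x
  proof (rule ccontr)
    assume "\<not> h x > 0"
    then have "x \<in> S" using that s by (auto simp: S_def)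
    then have "x \<le> s" unfolding s_def using \<open>bdd_above S\<close> by (rule cSup_upper)
    then show False using that by simp
  qed
  have "h b \<le> h s"
  proof (rule DERIV_nonpos_imp_decreasing_open[OF less_imp_le[OF \<open>s < b\<close>]])
    fix x assume "s < x" "x < b"
    then show "\<exists>y. (h has_real_derivative y) (at x) \<and> y \<le> 0"
      using deriv pos_after s by auto
  next
    show "continuous_on {s..b} h"
      using cont s by (auto intro: continuous_on_subset)
  qed
  then show False using hb s by simp
qed

lemma has_real_derivative_weighted_difference:
  fixes g :: "real \<Rightarrow> real" and k :: nat
  assumes g': "(g has_real_derivative g') (at x)" and "x \<noteq> 0"
  shows "((\<lambda>x. x ^ k * g x - M * x ^ Suc k / (real k + 1)) has_real_derivative
      x ^ k * (g' + k / x * g x - M)) (at x)"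
proof -
  have "((\<lambda>x. x ^ k * g x) has_real_derivative real k * x ^ (k - 1) * g x + x ^ k * g') (at x)"
    by (auto intro!: derivative_eq_intros g')
  moreover have "((\<lambda>x. M * x ^ Suc k / (real k + 1)) has_real_derivative M * x ^ k) (at x)"
  proof -
    have "M * (real (Suc k) * x ^ (Suc k - Suc 0)) / (real k + 1) = M * x ^ k"
      by (simp add: add.commute)
    then show ?thesis
      using DERIV_cdivide[OF DERIV_cmult[OF DERIV_pow[of "Suc k" x UNIV], where c = M],
          where c = "real k + 1"]
      by metis
  qed
  ultimately have "((\<lambda>x. x ^ k * g x - M * x ^ Suc k / (real k + 1)) has_real_derivative
      real k * x ^ (k - 1) * g x + x ^ k * g' - M * x ^ k) (at x)"
    by (rule DERIV_diff)
  moreover have "real k * x ^ (k - 1) * g x + x ^ k * g' - M * x ^ k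
      = x ^ k * (g' + k / x * g x - M)"
    using \<open>x \<noteq> 0\<close> by (cases k) (simp_all add: field_simps)
  ultimately show ?thesis
    by simp
qed

lemma linear_bound_of_radial_inequality:
  fixes g :: "real \<Rightarrow> real" and k :: nat
  assumes cont: "continuous_on {0..R} g" and "g 0 = 0" and "M \<ge> 0"
    and ineq: "\<And>x. x \<in> {0<..<R} \<Longrightarrow> g x > 0 \<Longrightarrow>
      \<exists>g'. (g has_real_derivative g') (at x) \<and> g' + k / x * g x \<le> M"
    and t: "t \<in> {0..R}"
  shows "g t \<le> M * t / (real k + 1)"
proof -
  \<comment> \<open>the inequality says (x^k g)' \<le> M x^k\<close>
  define h where "h x = x ^ k * g x - M * x ^ Suc k / (real k + 1)" for x
  have "h t \<le> 0"
  proof (rule nonpos_if_deriv_nonpos_where_pos[where a = 0 and b = t and h = h])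
    show "continuous_on {0..t} h"
    proof -
      have "continuous_on {0..t} g"
        using t by (auto intro: continuous_on_subset[OF cont])
      then show ?thesis
        unfolding h_def by (intro continuous_intros) auto
    qed
    show "h 0 \<le> 0"
      using \<open>g 0 = 0\<close> by (simp add: h_def)
  next
    fix x assume x: "x \<in> {0<..<t}" and "h x > 0"
    moreover have "M * x ^ Suc k / (real k + 1) \<ge> 0"
      using x \<open>M \<ge> 0\<close> by simp
    ultimately have "x ^ k * g x > 0"
      unfolding h_def by linarith
    then have "g x > 0"
      using x by (simp add: zero_less_mult_iff)
    then obtain g' where g': "(g has_real_derivative g') (at x)" "g' + k / x * g x \<le> M"
      using ineq x t by force
    have "(h has_real_derivative x ^ k * (g' + k / x * g x - M)) (at x)"
      unfolding h_def using g'(1) x by (intro has_real_derivative_weighted_difference) auto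
    moreover have "x ^ k * (g' + k / x * g x - M) \<le> 0"
      using x g'(2) by (intro mult_nonneg_nonpos) auto
    ultimately show "\<exists>y. (h has_real_derivative y) (at x) \<and> y \<le> 0"
      by blast
  qed (use t in auto)
  show ?thesis
  proof (cases "t = 0")
    case True
    then show ?thesis using \<open>g 0 = 0\<close> by simp
  next
    case False
    with t have "t ^ k > 0" by simp
    moreover have "t ^ k * g t \<le> t ^ k * (M * t / (real k + 1))"
      using \<open>h t \<le> 0\<close> by (simp add: h_def field_simps)
    ultimately show ?thesis by (meson mult_le_cancel_left_pos)
  qed
qed

lemma radial_flux_linear_bound:
  fixes n :: nat and p R lam :: real and \<rho> \<rho>' :: "real \<Rightarrow> real"
  assumes "n \<ge> 1" "1 < p" "R > 0"
    and C1_deriv: "\<forall>r\<in>{0..R}. (\<rho> has_real_derivative \<rho>' r) (at r within {0..R})"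
    and C1_cont: "continuous_on {0..R} \<rho>'"
    and smooth: "smooth_on \<rho> {0<..<R}"
    and nonneg: "\<forall>r\<in>{0..R}. \<rho> r \<ge> 0"
    and decr: "\<forall>r s. 0 \<le> r \<longrightarrow> r \<le> s \<longrightarrow> s \<le> R \<longrightarrow> \<rho> s \<le> \<rho> r"
    and ode: "\<forall>r\<in>{0<..<R}.
               - (p - 1) * (- \<rho>' r) powr (p - 2) * deriv \<rho>' r
               + (real n - 1) / r * (- \<rho>' r) powr (p - 1)
               = lam * (\<rho> r) powr (p - 1)"
    and "\<rho>' 0 = 0"
    and r: "r \<in> {0..R}"
  shows "(- \<rho>' r) powr (p - 1) \<le> max lam 0 * \<rho> 0 powr (p - 1) * r / n"
proof -
  define g where "g r = (- \<rho>' r) powr (p - 1)" for r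
  define M where "M = max lam 0 * \<rho> 0 powr (p - 1)"
  have "antimono_on {0..R} \<rho>"
    using decr by (auto intro: monotone_onI)
  then have flux_nonneg: "- \<rho>' t \<ge> 0" if "t \<in> {0..R}" for t
    using derivative_nonpos_if_antimono_on[OF \<open>R > 0\<close> _ C1_deriv C1_cont that] by simp
  have "g r \<le> M * r / (real (n - 1) + 1)"
  proof (rule linear_bound_of_radial_inequality[OF _ _ _ _ r])
    show "continuous_on {0..R} g"
      unfolding g_def using flux_nonneg \<open>1 < p\<close>
      by (intro continuous_on_powr' continuous_intros C1_cont) auto
    show "g 0 = 0" "M \<ge> 0"
      using \<open>\<rho>' 0 = 0\<close> \<open>1 < p\<close> by (simp_all add: g_def M_def)
  next
    fix t assume t: "t \<in> {0<..<R}" and "g t > 0"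
    then have "\<rho>' t < 0"
      using flux_nonneg[of t] by (cases "\<rho>' t = 0") (auto simp: g_def)
    have "(\<rho> has_real_derivative \<rho>' y) (at y)" if "y \<in> {0<..<R}" for y
      using bspec[OF C1_deriv, of y] that by (auto simp: at_within_Icc_at)
    then have "(\<rho>' has_real_derivative deriv \<rho>' t) (at t)"
      using smooth_on_derivative_has_derivative[OF smooth _ t] by simp
    from has_real_derivative_neg_powr[OF this \<open>\<rho>' t < 0\<close>, of "p - 1"]
    have "(g has_real_derivative - (p - 1) * (- \<rho>' t) powr (p - 2) * deriv \<rho>' t) (at t)"
      unfolding g_def by (simp add: diff_diff_eq)
    also have "- (p - 1) * (- \<rho>' t) powr (p - 2) * deriv \<rho>' t
        = lam * \<rho> t powr (p - 1) - (real n - 1) / t * g t"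
      using bspec[OF ode t] unfolding g_def by linarith
    finally have "(g has_real_derivative lam * \<rho> t powr (p - 1) - (real n - 1) / t * g t) (at t)" .
    moreover have "lam * \<rho> t powr (p - 1) \<le> M"
      unfolding M_def using nonneg decr t \<open>1 < p\<close>
      by (intro mult_mono powr_mono2) auto
    ultimately show "\<exists>g'. (g has_real_derivative g') (at t) \<and> g' + real (n - 1) / t * g t \<le> M"
      using \<open>n \<ge> 1\<close> by (auto simp: of_nat_diff)
  qed
  then show ?thesis
    using \<open>n \<ge> 1\<close> by (simp add: g_def M_def of_nat_diff)
qed

theorem theorem4p6:
  fixes n :: nat and p R \<beta> lam :: real and \<rho> \<rho>' :: "real \<Rightarrow> real"
  assumes n2: "n \<ge> 2"
    and p1: "1 < p"
    and R0: "R > 0"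
    and beta0: "\<beta> > 0"
    and C1_deriv: "\<forall>r\<in>{0..R}. (\<rho> has_real_derivative \<rho>' r) (at r within {0..R})"
    and C1_cont: "continuous_on {0..R} \<rho>'"
    and smooth: "smooth_on \<rho> {0<..<R}"
    and pos: "\<forall>r\<in>{0..R}. \<rho> r > 0"
    and decr: "\<forall>r s. 0 \<le> r \<longrightarrow> r \<le> s \<longrightarrow> s \<le> R \<longrightarrow> \<rho> s \<le> \<rho> r"
    and ode: "\<forall>r\<in>{0<..<R}.
               - (p - 1) * (- \<rho>' r) powr (p - 2) * deriv \<rho>' r
               + (real n - 1) / r * (- \<rho>' r) powr (p - 1)
               = lam * (\<rho> r) powr (p - 1)"
    and bc0: "\<rho>' 0 = 0"
    and bcR: "- ((- \<rho>' R) powr (p - 1)) + \<beta> * (\<rho> R) powr (p - 1) = 0"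
  shows "\<exists>C>0. \<forall>r\<in>{0..R}. (- \<rho>' r) powr (p - 1) / (\<rho> r) powr (p - 1) \<le> C * r"
proof -
  define M where "M = max lam 0 * \<rho> 0 powr (p - 1)"
  define C where "C = M / (n * \<rho> R powr (p - 1)) + 1"
  have "\<rho> R > 0"
    using pos R0 by auto
  then have "\<rho> R powr (p - 1) > 0"
    by simp
  then have "C > 0"
    unfolding C_def M_def by (simp add: add_nonneg_pos)
  moreover have "(- \<rho>' r) powr (p - 1) / \<rho> r powr (p - 1) \<le> C * r" if r: "r \<in> {0..R}" for r
  proof -
    have "(- \<rho>' r) powr (p - 1) \<le> M * r / n"
      unfolding M_def using n2 p1 R0 C1_deriv C1_cont smooth pos decr ode bc0 r
      by (intro radial_flux_linear_bound) (auto simp: less_imp_le)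
    moreover have "\<rho> R powr (p - 1) \<le> \<rho> r powr (p - 1)"
      using pos decr r p1 by (intro powr_mono2) (auto simp: less_imp_le)
    ultimately have "(- \<rho>' r) powr (p - 1) / \<rho> r powr (p - 1) \<le> M * r / n / \<rho> R powr (p - 1)"
      using \<open>\<rho> R powr (p - 1) > 0\<close> r by (intro frac_le) (auto simp: M_def)
    also have "\<dots> \<le> C * r"
      using r unfolding C_def by (simp add: field_simps)
    finally show ?thesis .
  qed
  ultimately show ?thesis
    by blast
qed

end
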